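(* Let $n\ge 1$ and consider a bin $B=(l_s,u_s]\times(l_t,u_t]\subseteq[0,n]^2$ with $l_s<u_s$, $l_t<u_t$, containing $o_i\ge 1$ observed rank pairs $(s_{i1},t_{i1}),\dots,(s_{io_i},t_{io_i})\in B$. Let $e_i=(u_s-l_s)(u_t-l_t)/n$ be its expected count. For a vertical split at $c\in(l_s,u_s)$, let $o_{i-}(c)=\#\{k: s_{ik}\le c\}$, $o_{i+}(c)=o_i-o_{i-}(c)$, $e_{i-}(c)=(c-l_s)(u_t-l_t)/n$ and $e_{i+}(c)=(u_s-c)(u_t-l_t)/n$. With the chi score $\mathrm{chi}(o,e)=(o-e)^2/e$, define $$\delta_i(c,\mathrm{chi})=\mathrm{chi}\big(o_{i+}(c),e_{i+}(c)\big)+\mathrm{chi}\big(o_{i-}(c),e_{i-}(c)\big)-\mathrm{chi}(o_i,e_i).$$ Then any $c^*\in(l_s,u_s)$ maximizing $\delta_i(c,\mathrm{chi})$ over $c\in(l_s,u_s)$ is one of the point coordinates $s_{i1},\dots,s_{io_i}$. The analogous statement holds for horizontal splits at $c\in(l_t,u_t)$ (with the roles of $s$ and $t$ interchanged), where the maximizer is one of $t_{i1},\dots,t_{io_i}$.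
   Context: Observations $(x_k,y_k)$, $k=1,\dots,n$, are converted to marginal ranks $s_k,t_k\in\{1,\dots,n\}$ (ties broken randomly), so under independence the rank pairs are uniform on the rank space $[0,n]^2$ and the expected number of points in a region of area $a$ is $a/n$. A bin is a rectangle $(l_s,u_s]\times(l_t,u_t]$; splitting it by a vertical line at $c$ produces a lower bin $(l_s,c]\times(l_t,u_t]$ and an upper bin $(c,u_s]\times(l_t,u_t]$ (a point with coordinate equal to $c$ is counted in the lower bin); horizontal splits are defined analogously in the $t$ coordinate. *)

theory Defs
  imports Complex_Main
begin

definition chi :: "real \<Rightarrow> real \<Rightarrow> real" where
  "chi m e = (m - e)^2 / e"

definition lower_count :: "(nat \<Rightarrow> nat) \<Rightarrow> nat \<Rightarrow> real \<Rightarrow> nat" where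
  "lower_count x m c = card {k \<in> {1..m}. real (x k) \<le> c}"

text \<open>Score gain delta of splitting the bin at c along the coordinate x,
  where the split direction has bounds (la, ua] and the other direction (lb, ub].\<close>
definition delta_split ::
  "nat \<Rightarrow> nat \<Rightarrow> (nat \<Rightarrow> nat) \<Rightarrow> real \<Rightarrow> real \<Rightarrow> real \<Rightarrow> real \<Rightarrow> real \<Rightarrow> real" where
  "delta_split n m x la ua lb ub c =
     chi (real m - real (lower_count x m c)) ((ua - c) * (ub - lb) / real n)
   + chi (real (lower_count x m c)) ((c - la) * (ub - lb) / real n)
   - chi (real m) ((ua - la) * (ub - lb) / real n)"

end

theory Submission
  imports Defs
begin

text \<open>Expanding chi o e = o^2/e - 2 o + e, the linear terms of the two halves sum to a
  constant. Between consecutive point coordinates the counts o+ and o- are constant, so there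
  the gain is, up to a constant, o+^2 / e+(c) + o-^2 / e-(c) with e+, e- affine in c and
  of constant sum: a strictly convex function of c, as 1/x is strictly convex and o+, o- are
  not both zero. Hence it has no local maximum off the point coordinates.\<close>

lemma chi_eq: "e \<noteq> 0 \<Longrightarrow> chi y e = y\<^sup>2 / e - 2 * y + e"
  unfolding chi_def by (simp add: field_simps power2_eq_square)

lemma inverse_strict_midpoint_convex:
  fixes b e :: real
  assumes "0 < e" "e < b"
  shows "2 / b < 1 / (b + e) + 1 / (b - e)"
proof -
  have "b + e > 0" "b - e > 0" "b > 0" using assms by auto
  then have "1 / (b + e) + 1 / (b - e) - 2 / b = 2 * e\<^sup>2 / (b * (b + e) * (b - e))"
    by (simp add: divide_simps power2_eq_square) (simp add: algebra_simps)
  also have "\<dots> > 0"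
    using assms by (intro divide_pos_pos mult_pos_pos) auto
  finally show ?thesis by simp
qed

lemma chi_pair_strict_midpoint_convex:
  fixes P Q a b e W :: real
  assumes "0 < e" "e < a" "e < b" "0 < W" "P \<noteq> 0 \<or> Q \<noteq> 0"
  shows "2 * (chi P (b * W) + chi Q (a * W))
         < chi P ((b + e) * W) + chi Q ((a - e) * W) + (chi P ((b - e) * W) + chi Q ((a + e) * W))"
proof -
  define gap where "gap x = 1 / (x + e) + 1 / (x - e) - 2 / x" for x
  have gap_pos: "gap a > 0" "gap b > 0"
    using inverse_strict_midpoint_convex[OF assms(1,2)] inverse_strict_midpoint_convex[OF assms(1,3)]
    unfolding gap_def by auto
  have chi_scaled: "chi y (x * W) = y\<^sup>2 / W * (1 / x) - 2 * y + x * W" if "x \<noteq> 0" for x y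
    using that assms(4) by (simp add: chi_eq)
  have "chi P ((b + e) * W) + chi Q ((a - e) * W) + (chi P ((b - e) * W) + chi Q ((a + e) * W))
        - 2 * (chi P (b * W) + chi Q (a * W))
      = P\<^sup>2 / W * gap b + Q\<^sup>2 / W * gap a"
  proof -
    have "b + e \<noteq> 0" "b - e \<noteq> 0" "a + e \<noteq> 0" "a - e \<noteq> 0" "a \<noteq> 0" "b \<noteq> 0"
      using assms by auto
    then show ?thesis
      unfolding chi_scaled[OF \<open>b + e \<noteq> 0\<close>] chi_scaled[OF \<open>b - e \<noteq> 0\<close>]
        chi_scaled[OF \<open>a + e \<noteq> 0\<close>] chi_scaled[OF \<open>a - e \<noteq> 0\<close>]
        chi_scaled[OF \<open>a \<noteq> 0\<close>] chi_scaled[OF \<open>b \<noteq> 0\<close>]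
      by (simp add: gap_def algebra_simps)
  qed
  moreover have "P\<^sup>2 / W * gap b + Q\<^sup>2 / W * gap a > 0"
    using assms gap_pos by (auto intro: add_pos_nonneg add_nonneg_pos)
  ultimately show ?thesis by linarith
qed

lemma finite_avoid_gap:
  fixes S :: "real set"
  assumes "finite S" "c \<notin> S"
  shows "\<exists>e>0. \<forall>x\<in>S. e < \<bar>x - c\<bar>"
  using assms
proof (induction S rule: finite_induct)
  case empty
  show ?case by (intro exI[of _ 1]) simp
next
  case (insert y S)
  then obtain e where "e > 0" "\<forall>x\<in>S. e < \<bar>x - c\<bar>" by auto
  moreover have "\<bar>y - c\<bar> > 0" using insert.prems by auto
  ultimately show ?case
    by (intro exI[of _ "min e (\<bar>y - c\<bar> / 2)"]) (auto simp: min_less_iff_disj)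
qed

lemma lower_count_shift_eq:
  assumes "\<forall>k\<in>{1..m}. e < \<bar>real (x k) - c\<bar>" "\<bar>d\<bar> \<le> e"
  shows "lower_count x m (c + d) = lower_count x m c"
proof -
  have "{k \<in> {1..m}. real (x k) \<le> c + d} = {k \<in> {1..m}. real (x k) \<le> c}"
    using assms by force
  then show ?thesis unfolding lower_count_def by simp
qed

lemma delta_split_strict_midpoint_convex:
  fixes x :: "nat \<Rightarrow> nat" and la ua lb ub c e :: real
  assumes "n \<ge> 1" "lb < ub" "m \<ge> 1" "0 < e" "e < c - la" "e < ua - c"
    and gap: "\<forall>k\<in>{1..m}. e < \<bar>real (x k) - c\<bar>"
  shows "2 * delta_split n m x la ua lb ub c
         < delta_split n m x la ua lb ub (c - e) + delta_split n m x la ua lb ub (c + e)"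
proof -
  define L where "L = real (lower_count x m c)"
  define W where "W = (ub - lb) / real n"
  have "W > 0" using assms unfolding W_def by simp
  have near: "delta_split n m x la ua lb ub (c + d) =
      chi (real m - L) ((ua - c - d) * W) + chi L ((c - la + d) * W) - chi (real m) ((ua - la) * W)"
    if "\<bar>d\<bar> \<le> e" for d
    using lower_count_shift_eq[OF gap that] unfolding delta_split_def L_def W_def
    by (simp add: algebra_simps)
  have "real m - L \<noteq> 0 \<or> L \<noteq> 0" using assms(3) by auto
  from chi_pair_strict_midpoint_convex[OF assms(4-6) \<open>W > 0\<close> this]
  show ?thesis
    using near[of "-e"] near[of e] near[of 0] assms(4) by (simp add: algebra_simps)
qed

lemma delta_split_max_at_point:
  fixes x :: "nat \<Rightarrow> nat" and la ua lb ub c :: real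
  assumes "n \<ge> 1" "lb < ub" "m \<ge> 1" "c \<in> {la<..<ua}"
    and max: "\<forall>c'\<in>{la<..<ua}. delta_split n m x la ua lb ub c' \<le> delta_split n m x la ua lb ub c"
  shows "\<exists>k\<in>{1..m}. c = real (x k)"
proof (rule ccontr)
  assume "\<not> (\<exists>k\<in>{1..m}. c = real (x k))"
  then have "c \<notin> insert la (insert ua ((\<lambda>k. real (x k)) ` {1..m}))"
    using assms(4) by auto
  from finite_avoid_gap[OF _ this] obtain e where "e > 0"
    and "\<forall>y\<in>insert la (insert ua ((\<lambda>k. real (x k)) ` {1..m})). e < \<bar>y - c\<bar>"
    by blast
  then have "e < c - la" "e < ua - c" "\<forall>k\<in>{1..m}. e < \<bar>real (x k) - c\<bar>"
    using assms(4) by auto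
  note convex = delta_split_strict_midpoint_convex[OF assms(1-3) \<open>e > 0\<close> this]
  have "c - e \<in> {la<..<ua}" "c + e \<in> {la<..<ua}"
    using \<open>e < c - la\<close> \<open>e < ua - c\<close> \<open>e > 0\<close> by auto
  with max have "delta_split n m x la ua lb ub (c - e) \<le> delta_split n m x la ua lb ub c"
    "delta_split n m x la ua lb ub (c + e) \<le> delta_split n m x la ua lb ub c"
    by blast+
  with convex show False by linarith
qed

theorem proposition1:
  fixes n m :: nat and s t :: "nat \<Rightarrow> nat"
    and ls us lt ut c :: real
  assumes "n \<ge> 1"
    and "0 \<le> ls" "ls < us" "us \<le> real n"
    and "0 \<le> lt" "lt < ut" "ut \<le> real n"
    and "m \<ge> 1"
    and "\<And>k. k \<in> {1..m} \<Longrightarrow> s k \<in> {1..n} \<and> t k \<in> {1..n}"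
    and "\<And>k. k \<in> {1..m} \<Longrightarrow> ls < real (s k) \<and> real (s k) \<le> us
                                   \<and> lt < real (t k) \<and> real (t k) \<le> ut"
  shows "(c \<in> {ls<..<us} \<and>
           (\<forall>c'\<in>{ls<..<us}. delta_split n m s ls us lt ut c' \<le> delta_split n m s ls us lt ut c)
           \<longrightarrow> (\<exists>k\<in>{1..m}. c = real (s k)))
       \<and> (c \<in> {lt<..<ut} \<and>
           (\<forall>c'\<in>{lt<..<ut}. delta_split n m t lt ut ls us c' \<le> delta_split n m t lt ut ls us c)
           \<longrightarrow> (\<exists>k\<in>{1..m}. c = real (t k)))"
  using delta_split_max_at_point[of n lt ut m c ls us s]
    delta_split_max_at_point[of n ls us m c lt ut t] assms
  by blast

end
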